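(* Let $\theta^0$ be a parameter vector at which Assumption 4 (GMFCQ, stated in the context) holds. If the first-order optimality condition (stated in the context) fails at $\theta^0$, then there exist a direction $D_\theta$ and positive constants $\epsilon_8,\epsilon_9$ such that $$\langle D_\theta,\nabla_\theta\mathcal{O}(\theta^0)\rangle<-\epsilon_8,\qquad \langle D_\theta,\nabla_\theta\text{dist}(b_{ij}(t,\theta^0),o_k)\rangle>\epsilon_9$$ for all $(i,j,k,t)$ with $\text{dist}(b_{ij}(t,\theta^0),o_k)=d_0$.
   Context: For a finite-dimensional parameter vector $\theta$ and $t\in[0,T]$, robot pieces $b_{ij}(t,\theta)\subset\mathbb{R}^3$ and obstacle pieces $o_k\subset\mathbb{R}^3$ are given (finitely many triples $(i,j,k)$) such that each $(t,\theta)\mapsto\text{dist}(b_{ij}(t,\theta),o_k)$ (shortest Euclidean distance) is differentiable; $d_0\ge0$ is a safe distance; $\mathcal{O}(\theta)$ is a differentiable cost. First-order optimality at $\theta^0$: for every direction $D_\theta$ with $\langle D_\theta,\nabla_\theta\text{dist}(b_{ij}(t,\theta^0),o_k)\rangle\ge0$ for all $(i,j,k,t)$ with $\text{dist}(b_{ij}(t,\theta^0),o_k)=d_0$, one has $\langle D_\theta,\nabla_\theta\mathcal{O}(\theta^0)\rangle\ge0$. Assumption 4 (GMFCQ at $\theta^0$): there exist a direction $D_\theta$ and $\epsilon_7>0$ with $\langle D_\theta,\nabla_\theta\text{dist}(b_{ij}(t,\theta^0),o_k)\rangle\ge\epsilon_7$ for all $(i,j,k,t)$ with $\text{dist}(b_{ij}(t,\theta^0),o_k)=d_0$.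 *)

theory Defs
  imports "HOL-Analysis.Analysis"
begin

definition grad :: "('a::real_inner \<Rightarrow> real) \<Rightarrow> 'a \<Rightarrow> 'a" where
  "grad f x = (SOME D. GDERIV f x :> D)"

definition piece_dist ::
  "('i \<Rightarrow> 'j \<Rightarrow> real \<Rightarrow> 'a \<Rightarrow> (real^3) set) \<Rightarrow> ('k \<Rightarrow> (real^3) set)
    \<Rightarrow> 'i \<Rightarrow> 'j \<Rightarrow> 'k \<Rightarrow> real \<Rightarrow> 'a \<Rightarrow> real" where
  "piece_dist b obs i j k t \<theta> = setdist (b i j t \<theta>) (obs k)"

end

theory Submission
  imports Defs
begin

text \<open>A direction \<open>D\<^sub>1\<close> witnessing the failure of first-order optimality is
  a descent direction that is feasible to first order. Adding a small multiple of the
  GMFCQ direction \<open>D\<^sub>2\<close> makes it strictly feasible, with a uniform margin, while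
  keeping a strict descent margin; the step size is chosen against
  \<open>|\<langle>D\<^sub>2, \<nabla>\<O>\<rangle>|\<close>.\<close>

lemma strictly_feasible_descent_direction:
  fixes g D\<^sub>1 D\<^sub>2 :: "'a::real_inner" and S :: "'a set"
  assumes descent: "inner D\<^sub>1 g < 0"
    and feasible: "\<And>x. x \<in> S \<Longrightarrow> inner D\<^sub>1 x \<ge> 0"
    and margin_pos: "e > 0"
    and strictly_feasible: "\<And>x. x \<in> S \<Longrightarrow> inner D\<^sub>2 x \<ge> e"
  obtains \<epsilon> \<delta> D where "\<epsilon> > 0" "\<delta> > 0" "inner D g < - \<epsilon>"
    "\<And>x. x \<in> S \<Longrightarrow> inner D x > \<delta>"
proof -
  define c where "c = - inner D\<^sub>1 g"
  define a where "a = inner D\<^sub>2 g"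
  define s where "s = c / (2 * (\<bar>a\<bar> + 1))"
  define D where "D = D\<^sub>1 + s *\<^sub>R D\<^sub>2"
  have c_pos: "c > 0"
    using descent by (simp add: c_def)
  then have s_pos: "s > 0"
    by (simp add: s_def add_pos_nonneg)
  have "s * a \<le> s * (\<bar>a\<bar> + 1)"
    using s_pos by (intro mult_left_mono) auto
  also have "\<dots> = c / 2"
    unfolding s_def by (simp add: field_simps add_pos_nonneg)
  finally have "inner D g \<le> - c / 2"
    by (simp add: D_def c_def a_def inner_add_left)
  then have descent_margin: "inner D g < - (c / 4)"
    using c_pos by linarith
  have feasible_margin: "inner D x > s * e / 2" if "x \<in> S" for x
  proof -
    have "s * e \<le> s * inner D\<^sub>2 x"
      using strictly_feasible[OF that] s_pos by (intro mult_left_mono) auto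
    moreover have "inner D x = inner D\<^sub>1 x + s * inner D\<^sub>2 x"
      by (simp add: D_def inner_add_left)
    moreover have "s * e > 0"
      using s_pos margin_pos by simp
    ultimately show ?thesis
      using feasible[OF that] by linarith
  qed
  show thesis
    using that[of "c / 4" "s * e / 2" D] c_pos s_pos margin_pos descent_margin feasible_margin
    by simp
qed

theorem lemma8:
  fixes b :: "'i \<Rightarrow> 'j \<Rightarrow> real \<Rightarrow> 'a::euclidean_space \<Rightarrow> (real^3) set"
    and obs :: "'k \<Rightarrow> (real^3) set"
    and P :: "('i \<times> 'j \<times> 'k) set"
    and T d0 :: real
    and Ocost :: "'a \<Rightarrow> real"
    and \<theta>0 :: 'a
  assumes finP: "finite P"
    and d0_nonneg: "0 \<le> d0"
    and dist_diff: "\<forall>(i,j,k)\<in>P. \<forall>t\<in>{0..T}. \<forall>\<theta>.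
          (\<lambda>(s,\<phi>). piece_dist b obs i j k s \<phi>) differentiable (at (t,\<theta>) within ({0..T} \<times> UNIV))"
    and O_diff: "\<forall>\<theta>. Ocost differentiable (at \<theta>)"
    and GMFCQ: "\<exists>D \<epsilon>7. \<epsilon>7 > 0 \<and>
          (\<forall>(i,j,k)\<in>P. \<forall>t\<in>{0..T}. piece_dist b obs i j k t \<theta>0 = d0 \<longrightarrow>
             inner D (grad (piece_dist b obs i j k t) \<theta>0) \<ge> \<epsilon>7)"
    and not_FOC: "\<not> (\<forall>D. (\<forall>(i,j,k)\<in>P. \<forall>t\<in>{0..T}. piece_dist b obs i j k t \<theta>0 = d0 \<longrightarrow>
             inner D (grad (piece_dist b obs i j k t) \<theta>0) \<ge> 0)
          \<longrightarrow> inner D (grad Ocost \<theta>0) \<ge> 0)"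
  shows "\<exists>D \<epsilon>8 \<epsilon>9. \<epsilon>8 > 0 \<and> \<epsilon>9 > 0 \<and> inner D (grad Ocost \<theta>0) < - \<epsilon>8 \<and>
          (\<forall>(i,j,k)\<in>P. \<forall>t\<in>{0..T}. piece_dist b obs i j k t \<theta>0 = d0 \<longrightarrow>
             inner D (grad (piece_dist b obs i j k t) \<theta>0) > \<epsilon>9)"
proof -
  define active where "active i j k t \<longleftrightarrow>
    (i, j, k) \<in> P \<and> t \<in> {0..T} \<and> piece_dist b obs i j k t \<theta>0 = d0" for i j k t
  define active_grads where "active_grads =
    {grad (piece_dist b obs i j k t) \<theta>0 | i j k t. active i j k t}"
  obtain D\<^sub>1 where "inner D\<^sub>1 (grad Ocost \<theta>0) < 0"
    and "\<forall>(i,j,k)\<in>P. \<forall>t\<in>{0..T}. piece_dist b obs i j k t \<theta>0 = d0 \<longrightarrow>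
           inner D\<^sub>1 (grad (piece_dist b obs i j k t) \<theta>0) \<ge> 0"
    using not_FOC by (meson not_le)
  then have "inner D\<^sub>1 (grad Ocost \<theta>0) < 0"
    and "\<And>x. x \<in> active_grads \<Longrightarrow> inner D\<^sub>1 x \<ge> 0"
    unfolding active_grads_def active_def by blast+
  moreover obtain D\<^sub>2 \<epsilon>7 where "\<epsilon>7 > 0"
    and "\<forall>(i,j,k)\<in>P. \<forall>t\<in>{0..T}. piece_dist b obs i j k t \<theta>0 = d0 \<longrightarrow>
           inner D\<^sub>2 (grad (piece_dist b obs i j k t) \<theta>0) \<ge> \<epsilon>7"
    using GMFCQ by blast
  then have "\<epsilon>7 > 0" and "\<And>x. x \<in> active_grads \<Longrightarrow> inner D\<^sub>2 x \<ge> \<epsilon>7"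
    unfolding active_grads_def active_def by blast+
  ultimately obtain \<epsilon> \<delta> D where "\<epsilon> > 0" "\<delta> > 0" "inner D (grad Ocost \<theta>0) < - \<epsilon>"
    and margin: "\<And>x. x \<in> active_grads \<Longrightarrow> inner D x > \<delta>"
    by (rule strictly_feasible_descent_direction) auto
  moreover have "inner D (grad (piece_dist b obs i j k t) \<theta>0) > \<delta>" if "active i j k t" for i j k t
    using margin that unfolding active_grads_def by blast
  ultimately show ?thesis
    unfolding active_def by blast
qed

end
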